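(* Let $a,b,c\in\mathbb{C}$ with $\Re(b)>0$, $\Re(b+a+c)>0$, $\Re(b+a-c)>0$, $\Re(b-a+c)>0$, $\Re(b-a-c)>0$, and $\frac{a+c}{b},\frac{a-c}{b}\notin\{\pm1,\pm3,\pm5,\dots\}$. Fix a square root $\sqrt{a^2+c^2}$, put $\nu=\frac{\sqrt{a^2+c^2}}{2b}$, $\tau_1=\frac12-\frac{a+c}{2b}$, $\tau_2=\frac12-\frac{a-c}{2b}$, $\tau_3=\frac12+\frac{a+c}{2b}$, $\tau_4=\frac12+\frac{a-c}{2b}$, and $Q=(b-a-c)(b+a+c)(b-a+c)(b+a-c)$. Assume $\frac12\pm\nu\notin\mathbb{Z}_0^-$ and $1+\tau_j\notin\mathbb{Z}_0^-$ ($j=1,\dots,4$). Then $$ {}_8F_7\!\left(\begin{matrix}1,\ \frac32,\ \frac32-\nu,\ \frac32+\nu,\ \tau_1,\ \tau_2,\ \tau_3,\ \tau_4\\ \frac12,\ \frac12-\nu,\ \frac12+\nu,\ 1+\tau_1,\ 1+\tau_2,\ 1+\tau_3,\ 1+\tau_4\end{matrix};\,-1\right) =\frac{\pi Q}{2\,(b^4-a^2b^2-c^2b^2)}\cdot\frac{\cos\!\big(\frac{a\pi}{2b}\big)\cos\!\big(\frac{c\pi}{2b}\big)}{\cos\!\big(\frac{c\pi}{b}\big)+\cos\!\big(\frac{a\pi}{b}\big)}. $$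
   Context: $\mathbb{Z}_0^-=\{0,-1,-2,\dots\}$. The Pochhammer symbol is $(\lambda)_0=1$, $(\lambda)_n=\lambda(\lambda+1)\cdots(\lambda+n-1)$ for $n\ge1$. The generalized hypergeometric series is ${}_pF_q\!\left(\begin{matrix}\alpha_1,\dots,\alpha_p\\ \beta_1,\dots,\beta_q\end{matrix};z\right)=\sum_{n=0}^\infty\frac{(\alpha_1)_n\cdots(\alpha_p)_n}{(\beta_1)_n\cdots(\beta_q)_n}\frac{z^n}{n!}$ (with no $\beta_j\in\mathbb{Z}_0^-$). *)

theory Defs
  imports "HOL-Analysis.Analysis"
begin

definition hyp_term :: "complex list \<Rightarrow> complex list \<Rightarrow> complex \<Rightarrow> nat \<Rightarrow> complex" where
  "hyp_term as bs z n =
     (prod_list (map (\<lambda>a. pochhammer a n) as) / prod_list (map (\<lambda>b. pochhammer b n) bs))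
     * z ^ n / of_nat (fact n)"

definition hypergeom :: "complex list \<Rightarrow> complex list \<Rightarrow> complex \<Rightarrow> complex" where
  "hypergeom as bs z = (\<Sum>n. hyp_term as bs z n)"

definition odd_int_complex :: "complex \<Rightarrow> bool" where
  "odd_int_complex w \<longleftrightarrow> (\<exists>k::int. w = of_int (2 * k + 1))"

end

theory Submission
  imports Defs "HOL-Probability.Characteristic_Functions"
begin

text \<open>
  Put \<open>p = (a + c)/(2b)\<close>, \<open>q = (a - c)/(2b)\<close> and \<open>x = n + 1/2\<close>. Every lower parameter of
  the \<open>\<^sub>8F\<^sub>7\<close> exceeds an upper one by \<open>1\<close>, so the \<open>n\<close>-th term is \<open>(-1)\<^sup>n\<close> times a rational
  function of \<open>x\<close>, and \<open>\<nu>\<^sup>2 = (p\<^sup>2 + q\<^sup>2)/2\<close> makes it collapse to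
  \<open>K (1/(x-p) + 1/(x+p) + 1/(x-q) + 1/(x+q))\<close>. Hence the series is a combination of the
  partial fraction expansions \<open>\<pi> sec(\<pi>p) = \<Sum>\<^sub>n (-1)\<^sup>n (1/(n+1/2-p) + 1/(n+1/2+p))\<close>; pairing
  consecutive terms reduces these to \<open>\<pi> cot(\<pi>v) = \<Sum>\<^sub>k (1/(k+v) - 1/(k+1-v))\<close>, which is the
  reflection formula for the digamma function. The closed form is then the identity
  \<open>sec(A+C) + sec(A-C) = 4 cos A cos C / (cos 2A + cos 2C)\<close>.
\<close>

lemma sin_pi_times_eq_0_iff:
  fixes z :: complex
  shows "sin (of_real pi * z) = 0 \<longleftrightarrow> z \<in> \<int>"
proof
  assume "sin (of_real pi * z) = 0"
  then obtain n :: int where "of_real pi * z = of_real (n * pi)" by (auto simp: sin_eq_0)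
  then show "z \<in> \<int>" by (simp add: field_simps)
next
  assume "z \<in> \<int>"
  then show "sin (of_real pi * z) = 0" by (auto elim!: Ints_cases simp: sin_eq_0)
qed

lemma cos_pi_times_eq_0_iff:
  fixes z :: complex
  shows "cos (of_real pi * z) = 0 \<longleftrightarrow> 1/2 - z \<in> \<int>"
proof -
  have "cos (of_real pi * z) = sin (of_real pi * (1/2 - z))"
    by (simp add: sin_cos_eq right_diff_distrib)
  then show ?thesis by (simp add: sin_pi_times_eq_0_iff)
qed

lemma Digamma_reflection_complex:
  fixes z :: complex
  assumes "z \<notin> \<int>"
  shows "Digamma (1 - z) - Digamma z = of_real pi * cot (of_real pi * z)"
proof -
  have z: "z \<notin> \<int>\<^sub>\<le>\<^sub>0" "1 - z \<notin> \<int>\<^sub>\<le>\<^sub>0"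
    using assms Ints_diff[OF Ints_1, of "1 - z"] by (auto intro: not_in_Ints_imp_not_in_nonpos_Ints)
  have "((\<lambda>w. rGamma w * rGamma (1 - w)) has_field_derivative
          - rGamma z * Digamma z * rGamma (1 - z) + rGamma z * (rGamma (1 - z) * Digamma (1 - z))) (at z)"
    using z by (auto intro!: derivative_eq_intros has_field_derivative_rGamma_no_nonpos_int)
  moreover have "((\<lambda>w. rGamma w * rGamma (1 - w)) has_field_derivative cos (of_real pi * z)) (at z)"
    unfolding rGamma_reflection_complex by (auto intro!: derivative_eq_intros)
  ultimately have "rGamma z * rGamma (1 - z) * (Digamma (1 - z) - Digamma z) = cos (of_real pi * z)"
    by (metis (no_types, lifting) DERIV_unique right_diff_distrib mult.commute mult.left_commute
        add.commute uminus_add_conv_diff mult_minus_left)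
  moreover have "sin (of_real pi * z) \<noteq> 0" using assms sin_pi_times_eq_0_iff by blast
  ultimately show ?thesis by (simp add: rGamma_reflection_complex cot_def field_simps)
qed

lemma Digamma_diff_sums:
  fixes v w :: "'a :: {real_normed_field, banach}"
  assumes "v \<noteq> 0" "w \<noteq> 0"
  shows "(\<lambda>k. 1 / (of_nat k + v) - 1 / (of_nat k + w)) sums (Digamma w - Digamma v)"
proof -
  have "(\<lambda>k. inverse (of_nat (Suc k)) - inverse (y + of_nat k)) sums (Digamma y + euler_mascheroni)"
    if "y \<noteq> 0" for y :: 'a
    using summable_Digamma[OF that] by (simp add: Digamma_def summable_sums)
  from sums_diff[OF this[OF assms(2)] this[OF assms(1)]] show ?thesis
    by (simp add: divide_inverse add.commute)
qed

lemma pi_cot_partial_fractions: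
  fixes v :: complex
  assumes "v \<notin> \<int>"
  shows "(\<lambda>k. 1 / (of_nat k + v) - 1 / (of_nat k + 1 - v)) sums (of_real pi * cot (of_real pi * v))"
proof -
  have "v \<noteq> 0" "1 - v \<noteq> 0" using assms by auto
  from Digamma_diff_sums[OF this] show ?thesis
    unfolding Digamma_reflection_complex[OF assms] by (simp only: add_diff_eq)
qed

lemma cot_add_cot_complement:
  fixes x :: "'a :: {real_normed_field, banach}"
  assumes "sin (2 * x) \<noteq> 0"
  shows "cot x + cot (of_real pi / 2 - x) = 2 / sin (2 * x)"
proof -
  have "sin x \<noteq> 0" "cos x \<noteq> 0" using assms unfolding sin_double by auto
  moreover have "cot (of_real pi / 2 - x) = sin x / cos x"
    unfolding cot_def sin_cos_eq[of x] cos_sin_eq[of x] by simp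
  moreover have "cot x = cos x / sin x" by (simp add: cot_def)
  ultimately have "cot x + cot (of_real pi / 2 - x) = (cos x * cos x + sin x * sin x) / (sin x * cos x)"
    by (simp only:) (simp add: field_simps)
  then show ?thesis by (simp add: sin_cos_squared_add3 sin_double)
qed

lemma sums_ungroup_pairs:
  fixes f :: "nat \<Rightarrow> 'a :: real_normed_vector"
  assumes "f \<longlonglongrightarrow> 0" and "(\<lambda>k. f (2 * k) + f (2 * k + 1)) sums s"
  shows "f sums s"
proof -
  have even: "(\<lambda>k. sum f {..<2 * k}) \<longlonglongrightarrow> s"
  proof -
    have "sum f {..<2 * k} = (\<Sum>j<k. f (2 * j) + f (2 * j + 1))" for k
      by (induction k) simp_all
    with assms(2) show ?thesis by (simp add: sums_def)
  qed
  have "(\<lambda>k. f (2 * k)) \<longlonglongrightarrow> 0"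
    using LIMSEQ_subseq_LIMSEQ[OF assms(1), of "\<lambda>k. 2 * k"] by (simp add: strict_mono_def o_def)
  with even have odd: "(\<lambda>k. sum f {..<2 * k} + f (2 * k)) \<longlonglongrightarrow> s + 0"
    by (rule tendsto_add)
  from even odd show ?thesis
    unfolding sums_def by (intro limseq_even_odd[of "\<lambda>n. sum f {..<n}"]) simp_all
qed

lemma LIMSEQ_one_over_of_nat_add:
  fixes w :: complex
  shows "(\<lambda>n. 1 / (of_nat n + w)) \<longlonglongrightarrow> 0"
  by (rule tendsto_divide_0[OF tendsto_const],
      rule tendsto_add_filterlim_at_infinity'[OF tendsto_of_nat tendsto_const])

lemma pi_cot_half_add_pi_cot_half_complement:
  fixes u :: complex
  assumes "u \<notin> \<int>"
  shows "1/2 * (of_real pi * cot (of_real pi * (u / 2)) + of_real pi * cot (of_real pi * ((1 - u) / 2)))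
           = of_real pi / sin (of_real pi * u)"
proof -
  define a where "a = of_real pi * (u / 2)"
  have double: "2 * a = of_real pi * u" unfolding a_def by simp
  have complement: "of_real pi * ((1 - u) / 2) = of_real pi / 2 - a"
    unfolding a_def by (simp add: field_simps)
  have "1/2 * (of_real pi * cot a + of_real pi * cot (of_real pi * ((1 - u) / 2)))
      = of_real pi / 2 * (cot a + cot (of_real pi / 2 - a))"
    unfolding complement by (simp add: algebra_simps)
  also have "\<dots> = of_real pi / sin (of_real pi * u)"
    using assms cot_add_cot_complement[of a] unfolding double by (simp add: sin_pi_times_eq_0_iff)
  finally show ?thesis unfolding a_def .
qed

lemma alternating_pi_csc_sums:
  fixes u :: complex
  assumes u: "u \<notin> \<int>"
  shows "(\<lambda>n. (-1)^n * (1 / (of_nat n + u) + 1 / (of_nat n + 1 - u)))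
           sums (of_real pi / sin (of_real pi * u))"
proof (rule sums_ungroup_pairs)
  from tendsto_add[OF LIMSEQ_one_over_of_nat_add[of u] LIMSEQ_one_over_of_nat_add[of "1 - u"]]
  have "(\<lambda>n. 1 / (of_nat n + u) + 1 / (of_nat n + 1 - u)) \<longlonglongrightarrow> 0"
    by (simp add: add_diff_eq)
  then have "(\<lambda>n. norm ((-1)^n * (1 / (of_nat n + u) + 1 / (of_nat n + 1 - u)))) \<longlonglongrightarrow> 0"
    unfolding norm_mult norm_power by (simp add: tendsto_norm_zero)
  then show "(\<lambda>n. (-1)^n * (1 / (of_nat n + u) + 1 / (of_nat n + 1 - u))) \<longlonglongrightarrow> 0"
    by (rule tendsto_norm_zero_cancel)
next
  have half: "u / 2 \<notin> \<int>" "(1 - u) / 2 \<notin> \<int>"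
  proof -
    have "u = 2 * (u / 2)" "u = 1 - 2 * ((1 - u) / 2)" by (simp_all add: field_simps)
    then show "u / 2 \<notin> \<int>" "(1 - u) / 2 \<notin> \<int>"
      using u by (metis Ints_1 Ints_diff Ints_mult Ints_numeral)+
  qed
  have twice: "of_nat (2 * k) + u = 2 * (of_nat k + u / 2)"
       "of_nat (2 * k) + 1 - u = 2 * (of_nat k + (1 - u) / 2)"
       "of_nat (2 * k + 1) + u = 2 * (of_nat k + 1 - (1 - u) / 2)"
       "of_nat (2 * k + 1) + 1 - u = 2 * (of_nat k + 1 - u / 2)" for k
    by (simp_all add: field_simps)
  have halve: "1 / (2 * y) = 1/2 * (1 / y)" for y :: complex by simp
  \<comment> \<open>A pair of consecutive terms combines the cotangent expansions at \<open>u/2\<close> and \<open>(1 - u)/2\<close>.\<close>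
  have pair: "(-1)^(2 * k) * (1 / (of_nat (2 * k) + u) + 1 / (of_nat (2 * k) + 1 - u))
      + (-1)^(2 * k + 1) * (1 / (of_nat (2 * k + 1) + u) + 1 / (of_nat (2 * k + 1) + 1 - u))
    = 1/2 * ((1 / (of_nat k + u / 2) - 1 / (of_nat k + 1 - u / 2))
             + (1 / (of_nat k + (1 - u) / 2) - 1 / (of_nat k + 1 - (1 - u) / 2)))" for k
    unfolding twice halve by (simp add: algebra_simps)
  have "(\<lambda>k. 1/2 * ((1 / (of_nat k + u / 2) - 1 / (of_nat k + 1 - u / 2))
                   + (1 / (of_nat k + (1 - u) / 2) - 1 / (of_nat k + 1 - (1 - u) / 2))))
      sums (of_real pi / sin (of_real pi * u))"
    unfolding pi_cot_half_add_pi_cot_half_complement[OF u, symmetric]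
    by (intro sums_mult sums_add pi_cot_partial_fractions half)
  then show "(\<lambda>k. (-1)^(2 * k) * (1 / (of_nat (2 * k) + u) + 1 / (of_nat (2 * k) + 1 - u))
      + (-1)^(2 * k + 1) * (1 / (of_nat (2 * k + 1) + u) + 1 / (of_nat (2 * k + 1) + 1 - u)))
      sums (of_real pi / sin (of_real pi * u))"
    unfolding pair .
qed

lemma alternating_pi_sec_sums:
  fixes p :: complex
  assumes "1/2 - p \<notin> \<int>"
  shows "(\<lambda>n. (-1)^n * (1 / (of_nat n + 1/2 - p) + 1 / (of_nat n + 1/2 + p)))
           sums (of_real pi / cos (of_real pi * p))"
proof -
  have shift: "of_nat n + (1/2 - p) = of_nat n + 1/2 - p" "of_nat n + 1 - (1/2 - p) = of_nat n + 1/2 + p"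
    for n :: nat by simp_all
  have "sin (of_real pi * (1/2 - p)) = cos (of_real pi * p)"
    by (simp add: cos_sin_eq[of "of_real pi * p"] right_diff_distrib)
  with alternating_pi_csc_sums[OF assms] show ?thesis unfolding shift by simp
qed

lemma pochhammer_plus1_divide:
  fixes z :: "'a::field_char_0"
  assumes "z \<notin> \<int>\<^sub>\<le>\<^sub>0"
  shows "pochhammer (z + 1) n / pochhammer z n = (z + of_nat n) / z"
proof -
  have "z * pochhammer (z + 1) n = (z + of_nat n) * pochhammer z n"
    by (metis pochhammer_rec pochhammer_rec')
  moreover have "z \<noteq> 0" "pochhammer z n \<noteq> 0"
    using assms pochhammer_eq_0_imp_nonpos_Int by auto
  ultimately show ?thesis by (simp add: field_simps)
qed

lemma half_add_notin_Ints:
  fixes y :: "'a :: field_char_0"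
  assumes "1/2 - y \<notin> \<int>"
  shows "1/2 + y \<notin> \<int>"
proof
  assume "1/2 + y \<in> \<int>"
  then have "1 - (1/2 + y) \<in> \<int>" by (intro Ints_diff) auto
  moreover have "1 - (1/2 + y) = 1/2 - y" by (simp add: field_simps)
  ultimately show False using assms by simp
qed

lemma hyp_term_8F7_eq_prod:
  fixes p q nu :: complex and n :: nat
  assumes p: "1/2 - p \<notin> \<int>" and q: "1/2 - q \<notin> \<int>"
    and nu_plus: "1/2 + nu \<notin> \<int>\<^sub>\<le>\<^sub>0" and nu_minus: "1/2 - nu \<notin> \<int>\<^sub>\<le>\<^sub>0"
  defines "x \<equiv> of_nat n + 1/2"
  shows "hyp_term [1, 3/2, 3/2 - nu, 3/2 + nu, 1/2 - p, 1/2 - q, 1/2 + p, 1/2 + q]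
           [1/2, 1/2 - nu, 1/2 + nu, 1 + (1/2 - p), 1 + (1/2 - q), 1 + (1/2 + p), 1 + (1/2 + q)] (-1) n
       = (-1)^n * (x / (1/2) * ((x - nu) / (1/2 - nu)) * ((x + nu) / (1/2 + nu))
           * ((1/2 - p) / (x - p)) * ((1/2 - q) / (x - q)) * ((1/2 + p) / (x + p)) * ((1/2 + q) / (x + q)))"
proof -
  define P where "P z = pochhammer z n" for z :: complex
  have up: "P (z + 1) / P z = (z + of_nat n) / z" and down: "P z / P (1 + z) = z / (z + of_nat n)"
    if "z \<notin> \<int>\<^sub>\<le>\<^sub>0" for z
    using pochhammer_plus1_divide[OF that, of n] unfolding P_def
    by (simp_all add: add.commute) (metis divide_inverse_commute inverse_divide)
  have nz: "P z \<noteq> 0" "P (1 + z) \<noteq> 0" if "z \<notin> \<int>\<^sub>\<le>\<^sub>0" for z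
    using that pochhammer_eq_0_imp_nonpos_Int plus_one_in_nonpos_Ints_imp unfolding P_def
    by (metis add.commute)+
  have half: "(1/2 :: complex) \<notin> \<int>\<^sub>\<le>\<^sub>0"
    using fraction_not_in_Ints[of 2 1, where 'a=complex] nonpos_Ints_subset_Ints by auto
  have pq: "1/2 - p \<notin> \<int>\<^sub>\<le>\<^sub>0" "1/2 + p \<notin> \<int>\<^sub>\<le>\<^sub>0" "1/2 - q \<notin> \<int>\<^sub>\<le>\<^sub>0" "1/2 + q \<notin> \<int>\<^sub>\<le>\<^sub>0"
    using p q half_add_notin_Ints not_in_Ints_imp_not_in_nonpos_Ints by blast+
  have shift: "1/2 + of_nat n = x" "1/2 + y + of_nat n = x + y" "1/2 - y + of_nat n = x - y" for y
    unfolding x_def by simp_all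
  have "hyp_term [1, 3/2, 3/2 - nu, 3/2 + nu, 1/2 - p, 1/2 - q, 1/2 + p, 1/2 + q]
           [1/2, 1/2 - nu, 1/2 + nu, 1 + (1/2 - p), 1 + (1/2 - q), 1 + (1/2 + p), 1 + (1/2 + q)] (-1) n
      = (-1)^n * (P (1/2 + 1) / P (1/2) * (P ((1/2 - nu) + 1) / P (1/2 - nu))
          * (P ((1/2 + nu) + 1) / P (1/2 + nu))
          * (P (1/2 - p) / P (1 + (1/2 - p))) * (P (1/2 - q) / P (1 + (1/2 - q)))
          * (P (1/2 + p) / P (1 + (1/2 + p))) * (P (1/2 + q) / P (1 + (1/2 + q))))"
    using nz[OF half] nz[OF nu_minus] nz[OF nu_plus]
      nz[OF pq(1)] nz[OF pq(2)] nz[OF pq(3)] nz[OF pq(4)]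
    unfolding hyp_term_def P_def by (simp add: pochhammer_fact[symmetric] field_simps)
  also have "\<dots> = (-1)^n * (x / (1/2) * ((x - nu) / (1/2 - nu)) * ((x + nu) / (1/2 + nu))
           * ((1/2 - p) / (x - p)) * ((1/2 - q) / (x - q)) * ((1/2 + p) / (x + p)) * ((1/2 + q) / (x + q)))"
    unfolding up[OF half] up[OF nu_minus] up[OF nu_plus]
      down[OF pq(1)] down[OF pq(2)] down[OF pq(3)] down[OF pq(4)] shift ..
  finally show ?thesis .
qed

lemma eight_partial_fractions:
  fixes x p q nu :: "'a :: field_char_0"
  assumes nu: "nu^2 = (p^2 + q^2) / 2"
    and "x \<noteq> p" "x \<noteq> -p" "x \<noteq> q" "x \<noteq> -q" "nu \<noteq> 1/2" "nu \<noteq> -1/2"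
  shows "x / (1/2) * ((x - nu) / (1/2 - nu)) * ((x + nu) / (1/2 + nu))
           * ((1/2 - p) / (x - p)) * ((1/2 - q) / (x - q)) * ((1/2 + p) / (x + p)) * ((1/2 + q) / (x + q))
       = (1/4 - p^2) * (1/4 - q^2) / (1/2 - p^2 - q^2) * (1/(x - p) + 1/(x + p) + 1/(x - q) + 1/(x + q))"
proof -
  define P where "P = (x - p) * (x + p)"
  define Q where "Q = (x - q) * (x + q)"
  define C where "C = (1/4 - p^2) * (1/4 - q^2)"
  define E where "E = 1/2 - p^2 - q^2"
  have pair: "1/(x - y) + 1/(x + y) = 2 * x / ((x - y) * (x + y))" if "x \<noteq> y" "x \<noteq> -y" for y
  proof -
    have "x - y \<noteq> 0" "x + y \<noteq> 0" using that by (auto simp: add_eq_0_iff)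
    then show ?thesis by (simp add: field_simps)
  qed
  have square_diff: "(y - nu) * (y + nu) = y^2 - (p^2 + q^2) / 2" for y
    unfolding nu[symmetric] by (simp add: algebra_simps power2_eq_square)
  have num: "(x - nu) * (x + nu) = (P + Q) / 2" and den: "(1/2 - nu) * (1/2 + nu) = E / 2"
    unfolding square_diff P_def Q_def E_def by (simp_all add: field_simps power2_eq_square)
  have "P \<noteq> 0" "Q \<noteq> 0" unfolding P_def Q_def using assms by (auto simp: add_eq_0_iff)
  moreover have "E \<noteq> 0" using den assms(6,7) by (auto simp: add_eq_0_iff)
  moreover have "(1/2 - p) * (1/2 - q) * (1/2 + p) * (1/2 + q) = C"
    unfolding C_def by (simp add: field_simps power2_eq_square)
  ultimately have "x / (1/2) * ((x - nu) / (1/2 - nu)) * ((x + nu) / (1/2 + nu))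
           * ((1/2 - p) / (x - p)) * ((1/2 - q) / (x - q)) * ((1/2 + p) / (x + p)) * ((1/2 + q) / (x + q))
      = x * ((x - nu) * (x + nu)) * C / (1/2 * ((1/2 - nu) * (1/2 + nu)) * (P * Q))"
    unfolding P_def Q_def by (simp only: times_divide_times_eq) (simp add: mult_ac)
  also have "\<dots> = x * ((P + Q) / 2) * C / (1/2 * (E / 2) * (P * Q))"
    unfolding num den ..
  also have "\<dots> = C / E * (2 * x / P + 2 * x / Q)"
    using \<open>P \<noteq> 0\<close> \<open>Q \<noteq> 0\<close> \<open>E \<noteq> 0\<close> by (simp add: field_simps)
  finally show ?thesis
    unfolding C_def E_def P_def Q_def add.assoc[symmetric] pair[OF assms(2,3)] add.assoc
      pair[OF assms(4,5)] .
qed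

lemma hyp_term_8F7_partial_fractions:
  fixes p q nu :: complex
  assumes p: "1/2 - p \<notin> \<int>" and q: "1/2 - q \<notin> \<int>" and nu: "nu^2 = (p^2 + q^2) / 2"
    and nu_plus: "1/2 + nu \<notin> \<int>\<^sub>\<le>\<^sub>0" and nu_minus: "1/2 - nu \<notin> \<int>\<^sub>\<le>\<^sub>0"
  shows "hyp_term [1, 3/2, 3/2 - nu, 3/2 + nu, 1/2 - p, 1/2 - q, 1/2 + p, 1/2 + q]
           [1/2, 1/2 - nu, 1/2 + nu, 1 + (1/2 - p), 1 + (1/2 - q), 1 + (1/2 + p), 1 + (1/2 + q)] (-1) n
       = (1/4 - p^2) * (1/4 - q^2) / (1/2 - p^2 - q^2)
         * ((-1)^n * (1 / (of_nat n + 1/2 - p) + 1 / (of_nat n + 1/2 + p))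
            + (-1)^n * (1 / (of_nat n + 1/2 - q) + 1 / (of_nat n + 1/2 + q)))"
proof -
  define x where "x = of_nat n + (1/2 :: complex)"
  have x_ne: "x \<noteq> y \<and> x \<noteq> -y" if "1/2 - y \<notin> \<int>" for y
  proof -
    have "1/2 - x = - of_nat n" "1/2 + x = of_nat (Suc n)" unfolding x_def by simp_all
    then show ?thesis
      using that half_add_notin_Ints[OF that] by (metis Ints_minus Ints_of_nat diff_minus_eq_add)
  qed
  have "nu \<noteq> 1/2" using nu_minus by (intro notI) simp
  moreover have "nu \<noteq> -1/2" using nu_plus by (intro notI) simp
  ultimately have "x / (1/2) * ((x - nu) / (1/2 - nu)) * ((x + nu) / (1/2 + nu))
         * ((1/2 - p) / (x - p)) * ((1/2 - q) / (x - q)) * ((1/2 + p) / (x + p)) * ((1/2 + q) / (x + q))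
      = (1/4 - p^2) * (1/4 - q^2) / (1/2 - p^2 - q^2) * (1/(x - p) + 1/(x + p) + 1/(x - q) + 1/(x + q))"
    using x_ne[OF p] x_ne[OF q] by (intro eight_partial_fractions[OF nu]) auto
  then show ?thesis
    unfolding hyp_term_8F7_eq_prod[OF p q nu_plus nu_minus] x_def
    by (simp only: distrib_left add.assoc mult.left_commute)
qed

lemma hypergeom_8F7_sums:
  fixes p q nu :: complex
  assumes p: "1/2 - p \<notin> \<int>" and q: "1/2 - q \<notin> \<int>" and nu: "nu^2 = (p^2 + q^2) / 2"
    and nu_plus: "1/2 + nu \<notin> \<int>\<^sub>\<le>\<^sub>0" and nu_minus: "1/2 - nu \<notin> \<int>\<^sub>\<le>\<^sub>0"
  shows "hyp_term [1, 3/2, 3/2 - nu, 3/2 + nu, 1/2 - p, 1/2 - q, 1/2 + p, 1/2 + q]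
           [1/2, 1/2 - nu, 1/2 + nu, 1 + (1/2 - p), 1 + (1/2 - q), 1 + (1/2 + p), 1 + (1/2 + q)] (-1)
         sums ((1/4 - p^2) * (1/4 - q^2) / (1/2 - p^2 - q^2)
               * (of_real pi / cos (of_real pi * p) + of_real pi / cos (of_real pi * q)))"
  using sums_mult[OF sums_add[OF alternating_pi_sec_sums[OF p] alternating_pi_sec_sums[OF q]]]
  unfolding hyp_term_8F7_partial_fractions[OF assms, abs_def] .

lemma cos_add_cos_eq_2_cos_cos:
  fixes x y :: "'a :: {real_normed_field, banach}"
  shows "cos (2 * x) + cos (2 * y) = 2 * cos (x + y) * cos (x - y)"
  using cos_times_cos[of "x + y" "x - y"] by (simp add: algebra_simps)

lemma sec_add_sec:
  fixes x y :: "'a :: {real_normed_field, banach}"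
  assumes "cos (x + y) \<noteq> 0" "cos (x - y) \<noteq> 0"
  shows "1 / cos (x + y) + 1 / cos (x - y) = 4 * cos x * cos y / (cos (2 * x) + cos (2 * y))"
proof -
  have "1 / cos (x + y) + 1 / cos (x - y) = (cos (x - y) + cos (x + y)) / (cos (x + y) * cos (x - y))"
    using assms by (simp add: field_simps)
  also have "cos (x - y) + cos (x + y) = 2 * cos x * cos y"
    using cos_times_cos[of x y] by (simp add: field_simps)
  also have "2 * cos x * cos y / (cos (x + y) * cos (x - y))
      = 4 * cos x * cos y / (2 * cos (x + y) * cos (x - y))"
    by (simp add: mult_ac)
  finally show ?thesis unfolding cos_add_cos_eq_2_cos_cos .
qed

lemma closed_form_8F7:
  fixes a b c :: complex
  assumes b: "b \<noteq> 0"
    and "cos (of_real pi * ((a + c) / (2 * b))) \<noteq> 0" "cos (of_real pi * ((a - c) / (2 * b))) \<noteq> 0"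
  shows "(1/4 - ((a + c) / (2 * b))^2) * (1/4 - ((a - c) / (2 * b))^2)
           / (1/2 - ((a + c) / (2 * b))^2 - ((a - c) / (2 * b))^2)
         * (of_real pi / cos (of_real pi * ((a + c) / (2 * b)))
            + of_real pi / cos (of_real pi * ((a - c) / (2 * b))))
       = (of_real pi * ((b - a - c) * (b + a + c) * (b - a + c) * (b + a - c))
            / (2 * (b ^ 4 - a ^ 2 * b ^ 2 - c ^ 2 * b ^ 2)))
         * (cos (a * of_real pi / (2 * b)) * cos (c * of_real pi / (2 * b))
            / (cos (c * of_real pi / b) + cos (a * of_real pi / b)))"
proof -
  define A where "A = a * of_real pi / (2 * b)"
  define C where "C = c * of_real pi / (2 * b)"
  define Q where "Q = (b - a - c) * (b + a + c) * (b - a + c) * (b + a - c)"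
  define D where "D = b ^ 4 - a ^ 2 * b ^ 2 - c ^ 2 * b ^ 2"
  have angles: "of_real pi * ((a + c) / (2 * b)) = A + C" "of_real pi * ((a - c) / (2 * b)) = A - C"
      "a * of_real pi / b = 2 * A" "c * of_real pi / b = 2 * C"
    unfolding A_def C_def using b by (simp_all add: field_simps)
  have ratio: "(1/4 - ((a + c) / (2 * b))^2) * (1/4 - ((a - c) / (2 * b))^2)
           / (1/2 - ((a + c) / (2 * b))^2 - ((a - c) / (2 * b))^2) = Q / (8 * D)"
  proof -
    define E where "E = b^2 - a^2 - c^2"
    have factors: "1/4 - ((a + c) / (2 * b))^2 = (b - a - c) * (b + a + c) / (4 * b^2)"
         "1/4 - ((a - c) / (2 * b))^2 = (b - a + c) * (b + a - c) / (4 * b^2)"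
         "1/2 - ((a + c) / (2 * b))^2 - ((a - c) / (2 * b))^2 = E / (2 * b^2)"
      unfolding E_def using b by (simp_all add: field_simps power2_eq_square)
    have D: "D = b^2 * E"
      unfolding D_def E_def by (simp add: algebra_simps power2_eq_square power4_eq_xxxx)
    show ?thesis
      unfolding factors D Q_def using b by (cases "E = 0") (simp_all add: field_simps)
  qed
  have secants: "of_real pi / cos (A + C) + of_real pi / cos (A - C)
      = of_real pi * (4 * cos A * cos C / (cos (2 * A) + cos (2 * C)))"
    using sec_add_sec[of A C] assms(2,3) unfolding angles
    by (simp add: divide_inverse distrib_left[symmetric])
  have "cos (2 * C) + cos (2 * A) = cos (2 * A) + cos (2 * C)" by (rule add.commute)
  then show ?thesis
    unfolding angles A_def[symmetric] C_def[symmetric] Q_def[symmetric] D_def[symmetric] ratio secants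
    by (cases "D = 0"; cases "cos (2 * A) + cos (2 * C) = 0") (simp_all add: field_simps)
qed

lemma half_minus_notin_Ints_if_not_odd:
  fixes w b :: complex
  assumes b: "b \<noteq> 0" and "\<not> odd_int_complex (w / b)"
  shows "1/2 - w / (2 * b) \<notin> \<int>"
proof
  assume "1/2 - w / (2 * b) \<in> \<int>"
  then obtain k where k: "1/2 - w / (2 * b) = of_int k" by (auto elim: Ints_cases)
  have "w / b = 1 - 2 * (1/2 - w / (2 * b))" using b by (simp add: field_simps)
  also have "\<dots> = of_int (2 * (-k) + 1)" unfolding k by simp
  finally show False using assms(2) unfolding odd_int_complex_def by blast
qed

theorem mainTheorem9:
  fixes a b c s :: complex
  assumes hb: "Re b > 0"
    and h1: "Re (b + a + c) > 0" and h2: "Re (b + a - c) > 0"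
    and h3: "Re (b - a + c) > 0" and h4: "Re (b - a - c) > 0"
    and hodd1: "\<not> odd_int_complex ((a + c) / b)"
    and hodd2: "\<not> odd_int_complex ((a - c) / b)"
    and hs: "s ^ 2 = a ^ 2 + c ^ 2"
    and hnu1: "1/2 + s / (2 * b) \<notin> \<int>\<^sub>\<le>\<^sub>0"
    and hnu2: "1/2 - s / (2 * b) \<notin> \<int>\<^sub>\<le>\<^sub>0"
    and ht1: "1 + (1/2 - (a + c) / (2 * b)) \<notin> \<int>\<^sub>\<le>\<^sub>0"
    and ht2: "1 + (1/2 - (a - c) / (2 * b)) \<notin> \<int>\<^sub>\<le>\<^sub>0"
    and ht3: "1 + (1/2 + (a + c) / (2 * b)) \<notin> \<int>\<^sub>\<le>\<^sub>0"
    and ht4: "1 + (1/2 + (a - c) / (2 * b)) \<notin> \<int>\<^sub>\<le>\<^sub>0"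
  shows "let \<nu> = s / (2 * b);
             \<tau>1 = 1/2 - (a + c) / (2 * b);
             \<tau>2 = 1/2 - (a - c) / (2 * b);
             \<tau>3 = 1/2 + (a + c) / (2 * b);
             \<tau>4 = 1/2 + (a - c) / (2 * b);
             Q = (b - a - c) * (b + a + c) * (b - a + c) * (b + a - c);
             as = [1, 3/2, 3/2 - \<nu>, 3/2 + \<nu>, \<tau>1, \<tau>2, \<tau>3, \<tau>4];
             bs = [1/2, 1/2 - \<nu>, 1/2 + \<nu>, 1 + \<tau>1, 1 + \<tau>2, 1 + \<tau>3, 1 + \<tau>4]
         in summable (hyp_term as bs (-1)) \<and>
            hypergeom as bs (-1) =
              (of_real pi * Q / (2 * (b ^ 4 - a ^ 2 * b ^ 2 - c ^ 2 * b ^ 2)))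
              * (cos (a * of_real pi / (2 * b)) * cos (c * of_real pi / (2 * b))
                 / (cos (c * of_real pi / b) + cos (a * of_real pi / b)))"
proof -
  have b: "b \<noteq> 0" using hb by auto
  have p: "1/2 - (a + c) / (2 * b) \<notin> \<int>" and q: "1/2 - (a - c) / (2 * b) \<notin> \<int>"
    using half_minus_notin_Ints_if_not_odd[OF b] hodd1 hodd2 by auto
  have nu: "(s / (2 * b))^2 = (((a + c) / (2 * b))^2 + ((a - c) / (2 * b))^2) / 2"
    using b hs by (simp add: field_simps power2_eq_square)
  note series = hypergeom_8F7_sums[OF p q nu hnu1 hnu2]
  have "cos (of_real pi * ((a + c) / (2 * b))) \<noteq> 0" "cos (of_real pi * ((a - c) / (2 * b))) \<noteq> 0"
    using p q unfolding cos_pi_times_eq_0_iff by auto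
  note closed_form = closed_form_8F7[OF b this]
  show ?thesis
    unfolding Let_def hypergeom_def
    using sums_summable[OF series] sums_unique[OF series, symmetric] closed_form by simp
qed

end
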